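(* Let $\Gamma\preceq_\exists\Gamma'$ be ordered abelian groups (in the language $\{0,+,<\}$) and $\gamma\in\Gamma$. Then: (i) if $\Delta^+$ (resp. $\Delta'^+$) is the minimal convex subgroup of $\Gamma$ (resp. $\Gamma'$) containing $\gamma$, then $\Gamma/\Delta^+$ is pure in $\Gamma'/\Delta'^+$, i.e., the quotient $(\Gamma'/\Delta'^+)/(\Gamma/\Delta^+)$ is torsion-free; (ii) if $\Gamma$ is $\aleph_1$-saturated and $\Delta$ (resp. $\Delta'$) is the maximal convex subgroup of $\Gamma$ (resp. $\Gamma'$) not containing $\gamma$, then $\Gamma/\Delta\preceq_\exists\Gamma'/\Delta'$.
   Context: $\preceq_\exists$ means existentially closed substructure. A structure is $\aleph_1$-saturated if every countable decreasing chain of non-empty definable sets (with parameters) has non-empty intersection. *)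

theory Defs
  imports Main
begin

record 'a struc =
  sdom :: "'a set"
  szero :: 'a
  splus :: "'a \<Rightarrow> 'a \<Rightarrow> 'a"
  sless :: "'a \<Rightarrow> 'a \<Rightarrow> bool"

datatype trm = Var nat | Zero | Plus trm trm

datatype fm = Eq trm trm | Lt trm trm | Neg fm | Conj fm fm | Disj fm fm | Ex nat fm

fun evalt :: "'a struc \<Rightarrow> (nat \<Rightarrow> 'a) \<Rightarrow> trm \<Rightarrow> 'a" where
  "evalt M v (Var n) = v n"
| "evalt M v Zero = szero M"
| "evalt M v (Plus s t) = splus M (evalt M v s) (evalt M v t)"

fun sat :: "'a struc \<Rightarrow> (nat \<Rightarrow> 'a) \<Rightarrow> fm \<Rightarrow> bool" where
  "sat M v (Eq s t) = (evalt M v s = evalt M v t)"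
| "sat M v (Lt s t) = sless M (evalt M v s) (evalt M v t)"
| "sat M v (Neg f) = (\<not> sat M v f)"
| "sat M v (Conj f g) = (sat M v f \<and> sat M v g)"
| "sat M v (Disj f g) = (sat M v f \<or> sat M v g)"
| "sat M v (Ex n f) = (\<exists>a\<in>sdom M. sat M (v(n := a)) f)"

fun qfree :: "fm \<Rightarrow> bool" where
  "qfree (Ex n f) = False"
| "qfree (Neg f) = qfree f"
| "qfree (Conj f g) = (qfree f \<and> qfree g)"
| "qfree (Disj f g) = (qfree f \<and> qfree g)"
| "qfree _ = True"

fun existential :: "fm \<Rightarrow> bool" where
  "existential (Ex n f) = existential f"
| "existential f = qfree f"

text \<open>An embedding: maps the domain into the domain and preserves and reflects
  all quantifier-free formulas (i.e. an injective homomorphism preserving and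
  reflecting the order).\<close>
definition is_embedding :: "'a struc \<Rightarrow> 'b struc \<Rightarrow> ('a \<Rightarrow> 'b) \<Rightarrow> bool" where
  "is_embedding A B h \<longleftrightarrow> h ` sdom A \<subseteq> sdom B \<and>
     (\<forall>f v. qfree f \<longrightarrow> (\<forall>n. v n \<in> sdom A) \<longrightarrow> (sat B (h \<circ> v) f \<longleftrightarrow> sat A v f))"

definition ex_closed_emb :: "'a struc \<Rightarrow> 'b struc \<Rightarrow> ('a \<Rightarrow> 'b) \<Rightarrow> bool" where
  "ex_closed_emb A B h \<longleftrightarrow> is_embedding A B h \<and>
     (\<forall>f v. existential f \<longrightarrow> (\<forall>n. v n \<in> sdom A) \<longrightarrow> sat B (h \<circ> v) f \<longrightarrow> sat A v f)"

definition definable :: "'a struc \<Rightarrow> 'a set \<Rightarrow> bool" where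
  "definable M S \<longleftrightarrow> (\<exists>f v. (\<forall>n. v n \<in> sdom M) \<and>
       S = {a \<in> sdom M. sat M (v(0 := a)) f})"

definition aleph1_saturated :: "'a struc \<Rightarrow> bool" where
  "aleph1_saturated M \<longleftrightarrow> (\<forall>S :: nat \<Rightarrow> 'a set.
      (\<forall>n. definable M (S n) \<and> S n \<noteq> {}) \<longrightarrow> (\<forall>n. S (Suc n) \<subseteq> S n) \<longrightarrow>
      (\<Inter>n. S n) \<noteq> {})"

text \<open>The ambient group \<Gamma>' is a type of class linordered_ab_group_add;
  \<Gamma> is a subgroup G of it (a substructure that is again a group).\<close>
definition subgroup_of :: "'a::linordered_ab_group_add set \<Rightarrow> bool" where
  "subgroup_of G \<longleftrightarrow> 0 \<in> G \<and> (\<forall>x\<in>G. \<forall>y\<in>G. x + y \<in> G) \<and> (\<forall>x\<in>G. - x \<in> G)"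

definition sub_struc :: "'a::linordered_ab_group_add set \<Rightarrow> 'a struc" where
  "sub_struc G = \<lparr>sdom = G, szero = 0, splus = (+), sless = (<)\<rparr>"

definition convex_subgroup :: "'a::linordered_ab_group_add set \<Rightarrow> 'a set \<Rightarrow> bool" where
  "convex_subgroup G D \<longleftrightarrow> D \<subseteq> G \<and> subgroup_of D \<and>
     (\<forall>x\<in>D. \<forall>y\<in>D. \<forall>z\<in>G. x \<le> z \<and> z \<le> y \<longrightarrow> z \<in> D)"

definition min_convex_containing :: "'a::linordered_ab_group_add set \<Rightarrow> 'a \<Rightarrow> 'a set \<Rightarrow> bool" where
  "min_convex_containing G g D \<longleftrightarrow> convex_subgroup G D \<and> g \<in> D \<and>
     (\<forall>E. convex_subgroup G E \<and> g \<in> E \<longrightarrow> D \<subseteq> E)"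

definition max_convex_avoiding :: "'a::linordered_ab_group_add set \<Rightarrow> 'a \<Rightarrow> 'a set \<Rightarrow> bool" where
  "max_convex_avoiding G g D \<longleftrightarrow> convex_subgroup G D \<and> g \<notin> D \<and>
     (\<forall>E. convex_subgroup G E \<and> g \<notin> E \<longrightarrow> E \<subseteq> D)"

definition coset :: "'a::linordered_ab_group_add set \<Rightarrow> 'a \<Rightarrow> 'a set" where
  "coset D x = (\<lambda>d. x + d) ` D"

definition setplus :: "'a::linordered_ab_group_add set \<Rightarrow> 'a set \<Rightarrow> 'a set" where
  "setplus X Y = {x + y | x y. x \<in> X \<and> y \<in> Y}"

definition quot_struc :: "'a::linordered_ab_group_add set \<Rightarrow> 'a set \<Rightarrow> 'a set struc" where
  "quot_struc G D = \<lparr>sdom = coset D ` G, szero = D, splus = setplus,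
      sless = (\<lambda>X Y. X \<noteq> Y \<and> (\<exists>x\<in>X. \<exists>y\<in>Y. x < y))\<rparr>"

end

theory Submission
  imports Defs "HOL-Combinatorics.Transposition"
begin

(* The minimal convex subgroup of a group H containing \<gamma> consists of the x with
   |x| <= n|\<gamma>| for some n, the maximal one avoiding \<gamma> of the x with n|x| < |\<gamma>|
   for all n.

   (i) If n x is congruent to some g in \<Gamma> modulo the former subgroup of \<Gamma>', then
   |n a - g| <= m|\<gamma>| has a solution in \<Gamma>', hence one in \<Gamma>; as n(x - a) is then bounded
   by a multiple of |\<gamma>|, so is x - a.

   (ii) Modulo the latter subgroup, s = t means N|s - t| < |\<gamma>| for every N.  Hence a
   quantifier-free statement about the quotient is equivalent to a family of statements
   about the group, universal in a parameter N (for the equations that hold) and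
   existential in a parameter M (for those that fail), and antitone in N.  An existential
   formula true in \<Gamma>'/\<Delta>' thus yields, for a fixed large M, existential formulas true in
   \<Gamma>' for every N, hence true in \<Gamma>.  Their witnesses form a decreasing chain of
   definable sets, so aleph_1-saturation of \<Gamma> gives one witness for all N, which
   makes the formula true in \<Gamma>/\<Delta>. *)

section \<open>Natural multiples and absolute values\<close>

fun nsmul :: "nat \<Rightarrow> 'a::monoid_add \<Rightarrow> 'a" where
  "nsmul 0 x = 0"
| "nsmul (Suc n) x = x + nsmul n x"

lemma sum_lessThan_const_eq_nsmul: "(\<Sum>i<n. x) = nsmul n (x::'a::comm_monoid_add)"
  by (induct n) (simp_all add: add.commute)

lemma nsmul_zero [simp]: "nsmul n (0::'a::monoid_add) = 0"
  by (induct n) simp_all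

lemma nsmul_add_left: "nsmul (m + n) x = nsmul m x + nsmul n (x::'a::monoid_add)"
  by (induct m) (simp_all add: add.assoc)

lemma nsmul_add: "nsmul n (x + y) = nsmul n x + nsmul n (y::'a::comm_monoid_add)"
  by (induct n) (simp_all add: algebra_simps)

lemma nsmul_minus: "nsmul n (- x) = - nsmul n (x::'a::ab_group_add)"
  by (induct n) simp_all

lemma nsmul_diff: "nsmul n (x - y) = nsmul n x - nsmul n (y::'a::ab_group_add)"
  using nsmul_add[of n x "- y"] by (simp add: nsmul_minus)

lemma nsmul_mono: "x \<le> y \<Longrightarrow> nsmul n x \<le> nsmul n (y::'a::ordered_comm_monoid_add)"
  by (induct n) (simp_all add: add_mono)

lemma nsmul_nonneg: "0 \<le> x \<Longrightarrow> 0 \<le> nsmul n (x::'a::ordered_comm_monoid_add)"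
  by (induct n) (simp_all add: add_nonneg_nonneg)

lemma nsmul_mono_left:
  fixes x :: "'a::ordered_comm_monoid_add"
  assumes "0 \<le> x" "m \<le> n"
  shows "nsmul m x \<le> nsmul n x"
proof -
  obtain k where "n = m + k" using \<open>m \<le> n\<close> le_Suc_ex by blast
  then show ?thesis using nsmul_add_left[of m k x] add_left_mono[OF nsmul_nonneg[OF \<open>0 \<le> x\<close>]]
    by fastforce
qed

lemma le_nsmul: "0 < n \<Longrightarrow> 0 \<le> x \<Longrightarrow> x \<le> nsmul n (x::'a::ordered_comm_monoid_add)"
  using nsmul_mono_left[of x 1 n] by simp

(* linordered_ab_group_add provides no abs. *)
definition gabs :: "'a::linordered_ab_group_add \<Rightarrow> 'a" where
  "gabs x = max x (- x)"

lemma gabs_le_iff: "gabs x \<le> c \<longleftrightarrow> x \<le> c \<and> - x \<le> c"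
  by (simp add: gabs_def)

lemma gabs_less_iff: "gabs x < c \<longleftrightarrow> x < c \<and> - x < c"
  by (simp add: gabs_def)

lemma gabs_ge: "x \<le> gabs x" "- x \<le> gabs x"
  by (simp_all add: gabs_def)

lemma gabs_cases: "gabs x = x \<or> gabs x = - x"
  by (simp add: gabs_def max_def)

lemma gabs_of_nonneg: "0 \<le> x \<Longrightarrow> gabs x = x"
  by (simp add: gabs_def max_def)

lemma gabs_minus [simp]: "gabs (- x) = gabs x"
  by (simp add: gabs_def max.commute)

lemma gabs_of_nonpos: "x \<le> 0 \<Longrightarrow> gabs x = - x"
  using gabs_of_nonneg[of "- x"] by (simp only: gabs_minus neg_0_le_iff_le)

lemma gabs_nonneg [simp]: "0 \<le> gabs x"
  by (cases "0 \<le> x") (auto simp: gabs_def max_def)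

lemma gabs_gabs [simp]: "gabs (gabs x) = gabs x"
  by (rule gabs_of_nonneg[OF gabs_nonneg])

lemma gabs_pos: "x \<noteq> 0 \<Longrightarrow> 0 < gabs x"
  by (simp add: gabs_def less_max_iff_disj) (metis linorder_neqE)

lemma gabs_triangle: "gabs (x + y) \<le> gabs x + gabs y"
  using add_mono[OF gabs_ge(1) gabs_ge(1), of x y] add_mono[OF gabs_ge(2) gabs_ge(2), of x y]
  by (simp add: gabs_le_iff)

lemma gabs_nsmul: "gabs (nsmul n x) = nsmul n (gabs x)"
proof (cases "0 \<le> x")
  case True
  then show ?thesis using nsmul_nonneg[OF True] by (simp only: gabs_of_nonneg)
next
  case False
  then have "x \<le> 0" by simp
  then have "nsmul n x \<le> 0" using nsmul_mono[of x 0 n] by simp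
  then show ?thesis using \<open>x \<le> 0\<close> by (simp only: gabs_of_nonpos nsmul_minus)
qed

section \<open>Convex subgroups\<close>

lemma subgroup_of_UNIV: "subgroup_of UNIV"
  by (simp add: subgroup_of_def)

lemma subgroup_diff: "subgroup_of H \<Longrightarrow> x \<in> H \<Longrightarrow> y \<in> H \<Longrightarrow> x - y \<in> H"
  unfolding subgroup_of_def by (metis diff_conv_add_uminus)

lemma subgroup_nsmul: "subgroup_of H \<Longrightarrow> x \<in> H \<Longrightarrow> nsmul n x \<in> H"
  by (induct n) (auto simp: subgroup_of_def)

lemma subgroup_gabs: "subgroup_of H \<Longrightarrow> x \<in> H \<Longrightarrow> gabs x \<in> H"
  using gabs_cases[of x] by (auto simp: subgroup_of_def)

lemma convex_subgroup_subgroup: "convex_subgroup H D \<Longrightarrow> subgroup_of D"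
  by (simp add: convex_subgroup_def)

lemma convex_subgroup_subset: "convex_subgroup H D \<Longrightarrow> D \<subseteq> H"
  by (simp add: convex_subgroup_def)

lemma convex_subgroupI:
  assumes "D \<subseteq> H" "subgroup_of D"
    and down: "\<And>x d. x \<in> H \<Longrightarrow> d \<in> D \<Longrightarrow> gabs x \<le> gabs d \<Longrightarrow> x \<in> D"
  shows "convex_subgroup H D"
  unfolding convex_subgroup_def
proof (intro conjI ballI impI assms(1,2))
  fix x y z assume "x \<in> D" "y \<in> D" "z \<in> H" and xzy: "x \<le> z \<and> z \<le> y"
  show "z \<in> D"
  proof (cases "0 \<le> z")
    case True
    have "gabs z = z" using True by (rule gabs_of_nonneg)
    also have "\<dots> \<le> gabs y" using xzy by (blast intro: order_trans[OF _ gabs_ge(1)])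
    finally have "gabs z \<le> gabs y" .
    then show ?thesis using down \<open>y \<in> D\<close> \<open>z \<in> H\<close> by blast
  next
    case False
    then have "gabs z = - z" by (simp add: gabs_of_nonpos)
    also have "\<dots> \<le> gabs x" using xzy by (blast intro: order_trans[OF _ gabs_ge(2)] le_imp_neg_le)
    finally have "gabs z \<le> gabs x" .
    then show ?thesis using down \<open>x \<in> D\<close> \<open>z \<in> H\<close> by blast
  qed
qed

lemma convex_subgroup_gabs_le:
  assumes "convex_subgroup H D" "d \<in> D" "x \<in> H" "gabs x \<le> gabs d"
  shows "x \<in> D"
proof -
  have D: "subgroup_of D"
    and cvx: "\<forall>y\<in>D. \<forall>z\<in>D. \<forall>w\<in>H. y \<le> w \<and> w \<le> z \<longrightarrow> w \<in> D"
    using assms(1) unfolding convex_subgroup_def by blast+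
  have "gabs d \<in> D" using subgroup_gabs[OF D assms(2)] .
  moreover from this have "- gabs d \<in> D" using D by (simp add: subgroup_of_def)
  moreover have "x \<le> gabs d" "- x \<le> gabs d" using assms(4) by (simp_all add: gabs_le_iff)
  moreover from this(2) have "- gabs d \<le> x" using minus_le_iff[of "gabs d" x] by blast
  ultimately show ?thesis using cvx assms(3) by blast
qed

definition infinitesimal :: "'a::linordered_ab_group_add \<Rightarrow> 'a \<Rightarrow> bool" where
  "infinitesimal c x \<longleftrightarrow> (\<forall>n. nsmul n (gabs x) < c)"

definition infinitesimals :: "'a::linordered_ab_group_add set \<Rightarrow> 'a \<Rightarrow> 'a set" where
  "infinitesimals H c = {x \<in> H. infinitesimal c x}"

definition finites :: "'a::linordered_ab_group_add set \<Rightarrow> 'a \<Rightarrow> 'a set" where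
  "finites H c = {x \<in> H. \<exists>n. gabs x \<le> nsmul n c}"

lemma infinitesimals_downward:
  "d \<in> infinitesimals H c \<Longrightarrow> x \<in> H \<Longrightarrow> gabs x \<le> gabs d \<Longrightarrow> x \<in> infinitesimals H c"
  unfolding infinitesimals_def infinitesimal_def by (blast intro: le_less_trans nsmul_mono)

lemma convex_subgroup_infinitesimals:
  assumes H: "subgroup_of H" and "0 < c"
  shows "convex_subgroup H (infinitesimals H c)"
proof (rule convex_subgroupI)
  show "subgroup_of (infinitesimals H c)"
    unfolding subgroup_of_def
  proof (intro conjI ballI)
    show "0 \<in> infinitesimals H c"
      using H \<open>0 < c\<close> by (simp add: infinitesimals_def infinitesimal_def subgroup_of_def gabs_of_nonneg)
  next
    fix x y assume x: "x \<in> infinitesimals H c" and y: "y \<in> infinitesimals H c"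
    define m where "m = max (gabs x) (gabs y)"
    have "nsmul n (gabs (x + y)) < c" for n
    proof -
      have "nsmul n (gabs (x + y)) \<le> nsmul n (m + m)"
        unfolding m_def by (intro nsmul_mono order_trans[OF gabs_triangle] add_mono) simp_all
      also have "\<dots> = nsmul (n + n) m" by (simp add: nsmul_add nsmul_add_left)
      also have "\<dots> < c" using x y by (auto simp: infinitesimals_def infinitesimal_def m_def max_def)
      finally show ?thesis .
    qed
    then show "x + y \<in> infinitesimals H c"
      using x y H by (simp add: infinitesimals_def infinitesimal_def subgroup_of_def)
  next
    fix x assume "x \<in> infinitesimals H c"
    then show "- x \<in> infinitesimals H c" using H by (simp add: infinitesimals_def infinitesimal_def subgroup_of_def)
  qed
next
  fix x d assume "x \<in> H" "d \<in> infinitesimals H c" "gabs x \<le> gabs d"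
  then show "x \<in> infinitesimals H c" using infinitesimals_downward by blast
qed (auto simp: infinitesimals_def infinitesimal_def)

lemma convex_subgroup_finites:
  assumes H: "subgroup_of H"
  shows "convex_subgroup H (finites H c)"
proof (rule convex_subgroupI)
  show "subgroup_of (finites H c)"
    unfolding subgroup_of_def
  proof (intro conjI ballI)
    show "0 \<in> finites H c"
      using H by (auto simp: finites_def subgroup_of_def gabs_of_nonneg intro: exI[of _ 0])
  next
    fix x y assume "x \<in> finites H c" "y \<in> finites H c"
    then obtain a b where "gabs x \<le> nsmul a c" "gabs y \<le> nsmul b c" "x \<in> H" "y \<in> H"
      by (auto simp: finites_def)
    moreover from this have "gabs (x + y) \<le> nsmul (a + b) c"
      unfolding nsmul_add_left by (blast intro: order_trans[OF gabs_triangle] add_mono)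
    ultimately show "x + y \<in> finites H c" using H by (auto simp: finites_def subgroup_of_def)
  next
    fix x assume "x \<in> finites H c"
    then show "- x \<in> finites H c" using H by (auto simp: finites_def subgroup_of_def)
  qed
next
  fix x d assume "x \<in> H" "d \<in> finites H c" "gabs x \<le> gabs d"
  then show "x \<in> finites H c" by (auto simp: finites_def intro: order_trans)
qed (auto simp: finites_def)

lemma max_convex_avoiding_nonzero: "max_convex_avoiding H \<gamma> D \<Longrightarrow> \<gamma> \<noteq> 0"
  by (auto simp: max_convex_avoiding_def convex_subgroup_def subgroup_of_def)

lemma max_convex_avoiding_eq_infinitesimals:
  assumes H: "subgroup_of H" and "\<gamma> \<in> H" and D: "max_convex_avoiding H \<gamma> D"
  shows "D = infinitesimals H (gabs \<gamma>)"
proof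
  have cvx: "convex_subgroup H D" and "\<gamma> \<notin> D"
    using D by (auto simp: max_convex_avoiding_def)
  show "D \<subseteq> infinitesimals H (gabs \<gamma>)"
  proof
    fix x assume "x \<in> D"
    have "nsmul n (gabs x) < gabs \<gamma>" for n
    proof (rule ccontr)
      assume "\<not> nsmul n (gabs x) < gabs \<gamma>"
      then have "gabs \<gamma> \<le> gabs (nsmul n (gabs x))" by (simp add: gabs_nsmul)
      moreover have "nsmul n (gabs x) \<in> D"
        using \<open>x \<in> D\<close> by (intro subgroup_nsmul subgroup_gabs convex_subgroup_subgroup[OF cvx])
      ultimately have "\<gamma> \<in> D" using convex_subgroup_gabs_le[OF cvx _ \<open>\<gamma> \<in> H\<close>] by blast
      then show False using \<open>\<gamma> \<notin> D\<close> by contradiction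
    qed
    moreover have "x \<in> H" using \<open>x \<in> D\<close> convex_subgroup_subset[OF cvx] by blast
    ultimately show "x \<in> infinitesimals H (gabs \<gamma>)" by (simp add: infinitesimals_def infinitesimal_def)
  qed
next
  have "\<gamma> \<notin> infinitesimals H (gabs \<gamma>)"
    by (auto simp: infinitesimals_def infinitesimal_def intro: exI[of _ 1])
  moreover have "0 < gabs \<gamma>" using gabs_pos max_convex_avoiding_nonzero[OF D] .
  ultimately show "infinitesimals H (gabs \<gamma>) \<subseteq> D"
    using D convex_subgroup_infinitesimals[OF H] by (auto simp: max_convex_avoiding_def)
qed

lemma min_convex_containing_eq_finites:
  assumes H: "subgroup_of H" and "\<gamma> \<in> H" and D: "min_convex_containing H \<gamma> D"
  shows "D = finites H (gabs \<gamma>)"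
proof
  have cvx: "convex_subgroup H D" and "\<gamma> \<in> D"
    using D by (auto simp: min_convex_containing_def)
  show "finites H (gabs \<gamma>) \<subseteq> D"
  proof
    fix x assume "x \<in> finites H (gabs \<gamma>)"
    then obtain n where "x \<in> H" and "gabs x \<le> gabs (nsmul n (gabs \<gamma>))"
      by (auto simp: finites_def gabs_nsmul)
    moreover have "nsmul n (gabs \<gamma>) \<in> D"
      using \<open>\<gamma> \<in> D\<close> by (intro subgroup_nsmul subgroup_gabs convex_subgroup_subgroup[OF cvx])
    ultimately show "x \<in> D" using convex_subgroup_gabs_le[OF cvx] by blast
  qed
next
  have "\<gamma> \<in> finites H (gabs \<gamma>)"
    using \<open>\<gamma> \<in> H\<close> by (auto simp: finites_def intro: exI[of _ 1])
  then show "D \<subseteq> finites H (gabs \<gamma>)"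
    using D convex_subgroup_finites[OF H] by (auto simp: min_convex_containing_def)
qed

lemma min_convex_containing_restrict:
  assumes "subgroup_of G" and "\<gamma> \<in> G"
    and "min_convex_containing G \<gamma> D" and "min_convex_containing UNIV \<gamma> D'"
  shows "D = D' \<inter> G"
  using min_convex_containing_eq_finites[OF assms(1-3)]
    min_convex_containing_eq_finites[OF subgroup_of_UNIV UNIV_I assms(4)]
  by (auto simp: finites_def)

section \<open>Formulas and saturation\<close>

lemma qfree_imp_existential: "qfree f \<Longrightarrow> existential f"
  by (cases f) simp_all

lemma existential_induct [consumes 1, case_names qfree Ex]:
  assumes "existential f"
    and "\<And>f. qfree f \<Longrightarrow> P f"
    and "\<And>n g. existential g \<Longrightarrow> P g \<Longrightarrow> P (Ex n g)"
  shows "P f"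
  using assms(1) by (induct f) (auto intro: assms(2,3))

primrec max_var_trm :: "trm \<Rightarrow> nat" where
  "max_var_trm (Var n) = n"
| "max_var_trm Zero = 0"
| "max_var_trm (Plus s t) = max (max_var_trm s) (max_var_trm t)"

primrec max_var :: "fm \<Rightarrow> nat" where
  "max_var (Eq s t) = max (max_var_trm s) (max_var_trm t)"
| "max_var (Lt s t) = max (max_var_trm s) (max_var_trm t)"
| "max_var (Neg f) = max_var f"
| "max_var (Conj f g) = max (max_var f) (max_var g)"
| "max_var (Disj f g) = max (max_var f) (max_var g)"
| "max_var (Ex n f) = max n (max_var f)"

lemma evalt_cong: "\<forall>k\<le>max_var_trm t. v k = w k \<Longrightarrow> evalt M v t = evalt M w t"
  by (induct t) auto

lemma sat_cong: "\<forall>k\<le>max_var f. v k = w k \<Longrightarrow> sat M v f = sat M w f"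
proof (induct f arbitrary: v w)
  case (Eq s t)
  then show ?case using evalt_cong[of s v w M] evalt_cong[of t v w M] by simp
next
  case (Lt s t)
  then show ?case using evalt_cong[of s v w M] evalt_cong[of t v w M] by simp
next
  case (Ex n f)
  have "sat M (v(n := a)) f = sat M (w(n := a)) f" for a
    by (rule Ex.hyps) (use Ex.prems in simp)
  then show ?case by simp
next
  case (Conj f g)
  have "sat M v f = sat M w f" "sat M v g = sat M w g"
    by (rule Conj.hyps(1), use Conj.prems in simp) (rule Conj.hyps(2), use Conj.prems in simp)
  then show ?case by simp
next
  case (Disj f g)
  have "sat M v f = sat M w f" "sat M v g = sat M w g"
    by (rule Disj.hyps(1), use Disj.prems in simp) (rule Disj.hyps(2), use Disj.prems in simp)
  then show ?case by simp
qed simp_all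

primrec rename_trm :: "(nat \<Rightarrow> nat) \<Rightarrow> trm \<Rightarrow> trm" where
  "rename_trm p (Var n) = Var (p n)"
| "rename_trm p Zero = Zero"
| "rename_trm p (Plus s t) = Plus (rename_trm p s) (rename_trm p t)"

primrec rename_fm :: "(nat \<Rightarrow> nat) \<Rightarrow> fm \<Rightarrow> fm" where
  "rename_fm p (Eq s t) = Eq (rename_trm p s) (rename_trm p t)"
| "rename_fm p (Lt s t) = Lt (rename_trm p s) (rename_trm p t)"
| "rename_fm p (Neg f) = Neg (rename_fm p f)"
| "rename_fm p (Conj f g) = Conj (rename_fm p f) (rename_fm p g)"
| "rename_fm p (Disj f g) = Disj (rename_fm p f) (rename_fm p g)"
| "rename_fm p (Ex n f) = Ex (p n) (rename_fm p f)"

lemma evalt_rename_trm: "evalt M v (rename_trm p t) = evalt M (v \<circ> p) t"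
  by (induct t) simp_all

lemma sat_rename_fm: "inj p \<Longrightarrow> sat M v (rename_fm p f) = sat M (v \<circ> p) f"
proof (induct f arbitrary: v)
  case (Ex n f)
  have "v(p n := a) \<circ> p = (v \<circ> p)(n := a)" for a
    using \<open>inj p\<close> by (auto simp: inj_def)
  then have "sat M (v(p n := a)) (rename_fm p f) = sat M ((v \<circ> p)(n := a)) f" for a
    by (simp only: Ex.hyps[OF \<open>inj p\<close>])
  then show ?case by (simp only: rename_fm.simps sat.simps)
qed (simp_all add: evalt_rename_trm)

lemma definable_var:
  assumes "\<forall>k. r k \<in> sdom M"
  shows "definable M {a \<in> sdom M. sat M (r(n := a)) f}"
proof -
  let ?swap = "transpose 0 n"
  have "((r \<circ> ?swap)(0 := a)) \<circ> ?swap = r(n := a)" for a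
    by (auto simp: transpose_def)
  then have "sat M ((r \<circ> ?swap)(0 := a)) (rename_fm ?swap f) = sat M (r(n := a)) f" for a
    by (simp add: sat_rename_fm)
  then show ?thesis
    unfolding definable_def using assms
    by (intro exI[of _ "rename_fm ?swap f"] exI[of _ "r \<circ> ?swap"]) auto
qed

lemma aleph1_saturated_common_witness:
  assumes "aleph1_saturated M" and "\<forall>k. r k \<in> sdom M"
    and antimono: "\<And>N a. sat M (r(n := a)) (f (Suc N)) \<Longrightarrow> sat M (r(n := a)) (f N)"
    and "\<forall>N. sat M r (Ex n (f N))"
  shows "\<exists>a\<in>sdom M. \<forall>N. sat M (r(n := a)) (f N)"
proof -
  define S where "S N = {a \<in> sdom M. sat M (r(n := a)) (f N)}" for N
  have "definable M (S N)" for N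
    unfolding S_def using definable_var[OF assms(2)] .
  moreover have "S N \<noteq> {}" for N
    using assms(4) by (auto simp: S_def)
  moreover have "S (Suc N) \<subseteq> S N" for N
    using antimono by (auto simp: S_def)
  ultimately have "(\<Inter>N. S N) \<noteq> {}"
    using \<open>aleph1_saturated M\<close> unfolding aleph1_saturated_def by blast
  then show ?thesis by (auto simp: S_def)
qed

primrec trm_val :: "(nat \<Rightarrow> 'a::monoid_add) \<Rightarrow> trm \<Rightarrow> 'a" where
  "trm_val r (Var n) = r n"
| "trm_val r Zero = 0"
| "trm_val r (Plus s t) = trm_val r s + trm_val r t"

lemma subgroup_trm_val: "subgroup_of H \<Longrightarrow> (\<And>k. r k \<in> H) \<Longrightarrow> trm_val r t \<in> H"
  by (induct t) (simp_all add: subgroup_of_def)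

lemma sub_struc_simps [simp]:
  "sdom (sub_struc H) = H" "szero (sub_struc H) = 0" "splus (sub_struc H) = (+)"
  "sless (sub_struc H) = (<)"
  by (simp_all add: sub_struc_def)

lemma evalt_sub_struc [simp]: "evalt (sub_struc H) r t = trm_val r t"
  by (induct t) simp_all

lemma ex_closed_emb_UNIV_existential:
  assumes "ex_closed_emb (sub_struc G) (sub_struc UNIV) id" and "existential f"
    and "\<forall>n. v n \<in> G" and "sat (sub_struc UNIV) v f"
  shows "sat (sub_struc G) v f"
  using assms unfolding ex_closed_emb_def by (metis id_comp sub_struc_simps(1))

section \<open>Quotients by convex subgroups\<close>

lemma quot_struc_simps [simp]:
  "sdom (quot_struc H E) = coset E ` H" "szero (quot_struc H E) = E"
  "splus (quot_struc H E) = setplus"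
  "sless (quot_struc H E) = (\<lambda>X Y. X \<noteq> Y \<and> (\<exists>x\<in>X. \<exists>y\<in>Y. x < y))"
  by (simp_all add: quot_struc_def)

lemma coset_self: "subgroup_of E \<Longrightarrow> a \<in> coset E a"
  unfolding coset_def subgroup_of_def by force

lemma coset_eq_iff:
  assumes E: "subgroup_of E"
  shows "coset E a = coset E b \<longleftrightarrow> a - b \<in> E"
proof
  assume "coset E a = coset E b"
  then obtain d where "d \<in> E" "a = b + d" using coset_self[OF E, of a] unfolding coset_def by auto
  then show "a - b \<in> E" by (simp add: algebra_simps)
next
  assume "a - b \<in> E"
  then have "b - a \<in> E" using E unfolding subgroup_of_def by (metis minus_diff_eq)
  have "coset E a \<subseteq> coset E b" if "a - b \<in> E" for a b
  proof
    fix x assume "x \<in> coset E a"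
    then obtain d where "d \<in> E" "x = b + ((a - b) + d)" unfolding coset_def by (auto simp: algebra_simps)
    moreover have "(a - b) + d \<in> E" using \<open>d \<in> E\<close> that E unfolding subgroup_of_def by blast
    ultimately show "x \<in> coset E b" unfolding coset_def by blast
  qed
  then show "coset E a = coset E b" using \<open>a - b \<in> E\<close> \<open>b - a \<in> E\<close> by blast
qed

lemma setplus_coset:
  assumes E: "subgroup_of E" and D: "subgroup_of D" and "D \<subseteq> E"
  shows "setplus (coset D a) (coset E b) = coset E (a + b)"
proof
  show "setplus (coset D a) (coset E b) \<subseteq> coset E (a + b)"
  proof
    fix x assume "x \<in> setplus (coset D a) (coset E b)"
    then obtain d e where "d \<in> D" "e \<in> E" "x = (a + b) + (d + e)"
      unfolding setplus_def coset_def by (auto simp: algebra_simps)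
    moreover have "d + e \<in> E"
      using \<open>d \<in> D\<close> \<open>e \<in> E\<close> \<open>D \<subseteq> E\<close> E unfolding subgroup_of_def by blast
    ultimately show "x \<in> coset E (a + b)" unfolding coset_def by blast
  qed
next
  show "coset E (a + b) \<subseteq> setplus (coset D a) (coset E b)"
  proof
    fix x assume "x \<in> coset E (a + b)"
    then obtain e where "e \<in> E" "x = a + (b + e)" unfolding coset_def by (auto simp: algebra_simps)
    moreover have "a \<in> coset D a" by (rule coset_self[OF D])
    ultimately show "x \<in> setplus (coset D a) (coset E b)" unfolding setplus_def coset_def by blast
  qed
qed

lemma setplus_coset_subgroup:
  assumes "subgroup_of D" "subgroup_of E" "D \<subseteq> E"
  shows "setplus (coset D a) E = coset E a"
  using setplus_coset[OF assms(2,1,3), of a 0] by (simp add: coset_def)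

lemma evalt_quot_struc:
  assumes "subgroup_of E"
  shows "evalt (quot_struc H E) (coset E \<circ> r) t = coset E (trm_val r t)"
  by (induct t) (simp_all add: setplus_coset[OF assms assms order_refl], simp add: coset_def)

lemma quot_valuation_lift:
  assumes "\<forall>n. v n \<in> sdom (quot_struc H E)"
  obtains r where "\<And>k. r k \<in> H" "v = coset E \<circ> r"
proof -
  have "\<forall>k. \<exists>y. y \<in> H \<and> v k = coset E y" using assms by auto
  then obtain r where "\<forall>k. r k \<in> H \<and> v k = coset E (r k)" by metis
  then show thesis using that[of r] by (auto simp: fun_eq_iff)
qed

lemma sat_quot_Ex_iff:
  "sat (quot_struc H E) (coset E \<circ> r) (Ex n f) \<longleftrightarrow>
    (\<exists>y\<in>H. sat (quot_struc H E) (coset E \<circ> r(n := y)) f)"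
proof -
  have upd: "(coset E \<circ> r)(n := coset E y) = coset E \<circ> r(n := y)" for y
    by (rule ext) simp
  have "sat (quot_struc H E) (coset E \<circ> r) (Ex n f) \<longleftrightarrow>
      (\<exists>y\<in>H. sat (quot_struc H E) ((coset E \<circ> r)(n := coset E y)) f)"
    by (simp only: sat.simps quot_struc_simps(1)) blast
  then show ?thesis by (simp only: upd)
qed

lemma quot_less_coset_iff:
  assumes H: "subgroup_of H" and "0 < c" and "a \<in> H" "b \<in> H"
  shows "sless (quot_struc H (infinitesimals H c)) (coset (infinitesimals H c) a) (coset (infinitesimals H c) b)
     \<longleftrightarrow> \<not> infinitesimal c (a - b) \<and> a < b"
    (is "?less \<longleftrightarrow> _")
proof -
  let ?E = "infinitesimals H c"
  have cvx: "convex_subgroup H ?E" using convex_subgroup_infinitesimals[OF H \<open>0 < c\<close>] .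
  have E: "subgroup_of ?E" using convex_subgroup_subgroup[OF cvx] .
  have abH: "a - b \<in> H" using subgroup_diff[OF H \<open>a \<in> H\<close> \<open>b \<in> H\<close>] .
  have cosets_eq: "coset ?E a = coset ?E b \<longleftrightarrow> infinitesimal c (a - b)"
    using coset_eq_iff[OF E, of a b] abH by (simp add: infinitesimals_def)
  show ?thesis
  proof
    assume ?less
    then obtain d e where "d \<in> ?E" "e \<in> ?E" "a + d < b + e" and ne: "\<not> infinitesimal c (a - b)"
      using cosets_eq unfolding coset_def by auto
    have "a < b"
    proof (rule ccontr)
      assume "\<not> a < b"
      have "e - d \<in> ?E" using subgroup_diff[OF E \<open>e \<in> ?E\<close> \<open>d \<in> ?E\<close>] .
      moreover have "gabs (a - b) \<le> gabs (e - d)"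
      proof -
        have "gabs (a - b) = a - b" using \<open>\<not> a < b\<close> by (simp add: gabs_of_nonneg)
        also have "\<dots> < e - d" using \<open>a + d < b + e\<close> by (simp add: algebra_simps)
        also have "\<dots> \<le> gabs (e - d)" by (rule gabs_ge)
        finally show ?thesis by simp
      qed
      ultimately have "a - b \<in> ?E" using convex_subgroup_gabs_le[OF cvx _ abH] by blast
      then show False using ne by (simp add: infinitesimals_def)
    qed
    then show "\<not> infinitesimal c (a - b) \<and> a < b" using ne by blast
  next
    assume "\<not> infinitesimal c (a - b) \<and> a < b"
    then show ?less using cosets_eq coset_self[OF E, of a] coset_self[OF E, of b] by auto
  qed
qed

lemma sat_quot_Eq_iff:
  assumes H: "subgroup_of H" and "0 < c" and r: "\<And>k. r k \<in> H"
  shows "sat (quot_struc H (infinitesimals H c)) (coset (infinitesimals H c) \<circ> r) (Eq s t)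
    \<longleftrightarrow> infinitesimal c (trm_val r s - trm_val r t)"
proof -
  have E: "subgroup_of (infinitesimals H c)"
    using convex_subgroup_subgroup[OF convex_subgroup_infinitesimals[OF H \<open>0 < c\<close>]] .
  have "trm_val r s - trm_val r t \<in> H"
    using subgroup_diff[OF H subgroup_trm_val[OF H r] subgroup_trm_val[OF H r]] .
  then show ?thesis
    unfolding sat.simps evalt_quot_struc[OF E] coset_eq_iff[OF E] by (simp add: infinitesimals_def)
qed

lemma sat_quot_Lt_iff:
  assumes H: "subgroup_of H" and "0 < c" and r: "\<And>k. r k \<in> H"
  shows "sat (quot_struc H (infinitesimals H c)) (coset (infinitesimals H c) \<circ> r) (Lt s t)
    \<longleftrightarrow> \<not> infinitesimal c (trm_val r s - trm_val r t) \<and> trm_val r s < trm_val r t"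
proof -
  have E: "subgroup_of (infinitesimals H c)"
    using convex_subgroup_subgroup[OF convex_subgroup_infinitesimals[OF H \<open>0 < c\<close>]] .
  show ?thesis
    using quot_less_coset_iff[OF H \<open>0 < c\<close> subgroup_trm_val[OF H r] subgroup_trm_val[OF H r]]
    by (simp only: sat.simps evalt_quot_struc[OF E])
qed

lemma sat_quot_infinitesimals_qfree_cong:
  assumes G: "subgroup_of G" and c: "0 < c" and r: "\<And>k. r k \<in> G" and "qfree f"
  shows "sat (quot_struc UNIV (infinitesimals UNIV c)) (coset (infinitesimals UNIV c) \<circ> r) f
     = sat (quot_struc G (infinitesimals G c)) (coset (infinitesimals G c) \<circ> r) f"
  using \<open>qfree f\<close>
proof (induct f)
  case (Eq s t)
  show ?case
    unfolding sat_quot_Eq_iff[OF G c r] sat_quot_Eq_iff[OF subgroup_of_UNIV c UNIV_I] ..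
next
  case (Lt s t)
  show ?case
    unfolding sat_quot_Lt_iff[OF G c r] sat_quot_Lt_iff[OF subgroup_of_UNIV c UNIV_I] ..
qed simp_all

section \<open>Approximating the quotient inside the group\<close>

fun trm_nsmul :: "nat \<Rightarrow> trm \<Rightarrow> trm" where
  "trm_nsmul 0 t = Zero"
| "trm_nsmul (Suc n) t = Plus t (trm_nsmul n t)"

lemma trm_val_trm_nsmul [simp]: "trm_val r (trm_nsmul n t) = nsmul n (trm_val r t)"
  by (induct n) simp_all

definition near_fm :: "nat \<Rightarrow> nat \<Rightarrow> trm \<Rightarrow> trm \<Rightarrow> fm" where
  "near_fm v N s t = Conj (Lt (trm_nsmul N s) (Plus (trm_nsmul N t) (Var v)))
                          (Lt (trm_nsmul N t) (Plus (trm_nsmul N s) (Var v)))"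

lemma sat_near_fm:
  "sat (sub_struc H) r (near_fm v N s t) \<longleftrightarrow> nsmul N (gabs (trm_val r s - trm_val r t)) < r v"
  by (simp add: near_fm_def gabs_nsmul[symmetric] nsmul_diff gabs_less_iff algebra_simps)

lemma sat_near_fm_antimono:
  "N \<le> N' \<Longrightarrow> sat (sub_struc H) r (near_fm v N' s t) \<Longrightarrow> sat (sub_struc H) r (near_fm v N s t)"
  unfolding sat_near_fm by (rule le_less_trans[OF nsmul_mono_left[OF gabs_nonneg]])

(* approx_qf v N M p f says that f has truth value p in the quotient by the
   infinitesimals relative to c = r v: an equation holds there iff near_fm v N holds
   for every N, and fails iff near_fm v M fails for some M.  Only quantifier-free f
   are meant; the Ex clause is a dummy. *)
primrec approx_qf :: "nat \<Rightarrow> nat \<Rightarrow> nat \<Rightarrow> bool \<Rightarrow> fm \<Rightarrow> fm" where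
  "approx_qf v N M p (Eq s t) = (if p then near_fm v N s t else Neg (near_fm v M s t))"
| "approx_qf v N M p (Lt s t) =
     (if p then Conj (Neg (near_fm v M s t)) (Lt s t) else Disj (near_fm v N s t) (Neg (Lt s t)))"
| "approx_qf v N M p (Neg f) = approx_qf v N M (\<not> p) f"
| "approx_qf v N M p (Conj f g) =
     (if p then Conj (approx_qf v N M p f) (approx_qf v N M p g)
      else Disj (approx_qf v N M p f) (approx_qf v N M p g))"
| "approx_qf v N M p (Disj f g) =
     (if p then Disj (approx_qf v N M p f) (approx_qf v N M p g)
      else Conj (approx_qf v N M p f) (approx_qf v N M p g))"
| "approx_qf v N M p (Ex n f) = Eq Zero Zero"

lemma qfree_approx_qf: "qfree (approx_qf v N M p f)"
  by (induct f arbitrary: p) (simp_all add: near_fm_def)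

lemma sat_approx_qf_antimono:
  "N \<le> N' \<Longrightarrow> sat (sub_struc H) r (approx_qf v N' M p f) \<Longrightarrow> sat (sub_struc H) r (approx_qf v N M p f)"
  by (induct f arbitrary: p) (auto dest: sat_near_fm_antimono split: if_splits)

fun approx_fm :: "nat \<Rightarrow> nat \<Rightarrow> nat \<Rightarrow> fm \<Rightarrow> fm" where
  "approx_fm v N M (Ex n f) = Ex n (approx_fm v N M f)"
| "approx_fm v N M f = approx_qf v N M True f"

lemma approx_fm_qfree: "qfree f \<Longrightarrow> approx_fm v N M f = approx_qf v N M True f"
  by (cases f) simp_all

lemma existential_approx_fm: "existential f \<Longrightarrow> existential (approx_fm v N M f)"
  by (induct rule: existential_induct) (simp_all add: approx_fm_qfree qfree_approx_qf qfree_imp_existential)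

lemma sat_approx_fm_antimono:
  "N \<le> N' \<Longrightarrow> sat (sub_struc H) r (approx_fm v N' M f) \<Longrightarrow> sat (sub_struc H) r (approx_fm v N M f)"
proof (induct f arbitrary: r)
  case (Ex n f)
  then show ?case by auto
qed (auto intro: sat_approx_qf_antimono[of N N', simplified] simp del: approx_qf.simps)

lemma all_disj_antimono:
  fixes A B :: "nat \<Rightarrow> bool"
  assumes "\<And>N N'. N \<le> N' \<Longrightarrow> A N' \<Longrightarrow> A N"
    and "\<And>N N'. N \<le> N' \<Longrightarrow> B N' \<Longrightarrow> B N"
    and "\<forall>N. A N \<or> B N"
  shows "(\<forall>N. A N) \<or> (\<forall>N. B N)"
proof (rule ccontr)
  assume "\<not> ?thesis"
  then obtain N1 N2 where "\<not> A N1" "\<not> B N2" by blast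
  moreover have "A (max N1 N2) \<or> B (max N1 N2)" using assms(3) by blast
  ultimately show False using assms(1)[of N1 "max N1 N2"] assms(2)[of N2 "max N1 N2"] by auto
qed

lemma eventually_not_infinitesimal:
  assumes "\<not> infinitesimal c d"
  shows "\<forall>\<^sub>F M in sequentially. \<not> nsmul M (gabs d) < c"
proof -
  obtain N where "\<not> nsmul N (gabs d) < c" using assms by (auto simp: infinitesimal_def)
  then have "\<not> nsmul M (gabs d) < c" if "N \<le> M" for M
    using nsmul_mono_left[OF gabs_nonneg that, of d] by (blast intro: le_less_trans)
  then show ?thesis by (auto simp: eventually_sequentially)
qed

lemma eventually_sat_approx_qf:
  assumes H: "subgroup_of H" and c: "0 < c" and r: "\<And>k. r k \<in> H" and "r v = c" and "qfree f"
  shows "\<forall>\<^sub>F M in sequentially. \<forall>N. sat (sub_struc H) r (approx_qf v N M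
           (sat (quot_struc H (infinitesimals H c)) (coset (infinitesimals H c) \<circ> r) f) f)"
  using \<open>qfree f\<close>
proof (induct f)
  case (Eq s t)
  show ?case
    unfolding sat_quot_Eq_iff[OF H c r]
    using eventually_not_infinitesimal[of c "trm_val r s - trm_val r t"]
    by (cases "infinitesimal c (trm_val r s - trm_val r t)")
      (simp_all add: sat_near_fm infinitesimal_def \<open>r v = c\<close>)
next
  case (Lt s t)
  show ?case
    unfolding sat_quot_Lt_iff[OF H c r]
    using eventually_not_infinitesimal[of c "trm_val r s - trm_val r t"]
    by (cases "infinitesimal c (trm_val r s - trm_val r t)")
      (auto simp: sat_near_fm infinitesimal_def \<open>r v = c\<close> elim: eventually_mono)
next
  case (Neg f)
  then show ?case by simp
next
  case (Conj f g)
  let ?sat = "sat (quot_struc H (infinitesimals H c)) (coset (infinitesimals H c) \<circ> r)"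
  have "qfree f" "qfree g" using Conj.prems by simp_all
  note f = Conj.hyps(1)[OF \<open>qfree f\<close>] and g = Conj.hyps(2)[OF \<open>qfree g\<close>]
  consider "?sat f" "?sat g" | "\<not> ?sat f" | "\<not> ?sat g" by blast
  then show ?case
    by cases (auto intro: eventually_mono[OF eventually_conj[OF f g]] eventually_mono[OF f]
        eventually_mono[OF g])
next
  case (Disj f g)
  let ?sat = "sat (quot_struc H (infinitesimals H c)) (coset (infinitesimals H c) \<circ> r)"
  have "qfree f" "qfree g" using Disj.prems by simp_all
  note f = Disj.hyps(1)[OF \<open>qfree f\<close>] and g = Disj.hyps(2)[OF \<open>qfree g\<close>]
  consider "\<not> ?sat f" "\<not> ?sat g" | "?sat f" | "?sat g" by blast
  then show ?case
    by cases (auto intro: eventually_mono[OF eventually_conj[OF f g]] eventually_mono[OF f]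
        eventually_mono[OF g])
qed simp

lemma sat_quot_of_approx_qf:
  assumes H: "subgroup_of H" and c: "0 < c" and r: "\<And>k. r k \<in> H" and "r v = c" and "qfree f"
    and "\<forall>N. sat (sub_struc H) r (approx_qf v N M p f)"
  shows "sat (quot_struc H (infinitesimals H c)) (coset (infinitesimals H c) \<circ> r) f = p"
  using assms(5,6)
proof (induct f arbitrary: p)
  case (Eq s t)
  then show ?case
    unfolding sat_quot_Eq_iff[OF H c r]
    by (cases p) (auto simp: sat_near_fm infinitesimal_def \<open>r v = c\<close>)
next
  case (Lt s t)
  then show ?case
    unfolding sat_quot_Lt_iff[OF H c r]
    by (cases p) (auto simp: sat_near_fm infinitesimal_def \<open>r v = c\<close>)
next
  case (Conj f g)
  show ?case
  proof (cases p)
    case False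
    have "(\<forall>N. sat (sub_struc H) r (approx_qf v N M False f)) \<or>
          (\<forall>N. sat (sub_struc H) r (approx_qf v N M False g))"
      by (rule all_disj_antimono) (use Conj.prems False in \<open>auto intro: sat_approx_qf_antimono\<close>)
    then show ?thesis using Conj False by auto
  qed (use Conj in auto)
next
  case (Disj f g)
  show ?case
  proof (cases p)
    case True
    have "(\<forall>N. sat (sub_struc H) r (approx_qf v N M True f)) \<or>
          (\<forall>N. sat (sub_struc H) r (approx_qf v N M True g))"
      by (rule all_disj_antimono) (use Disj.prems True in \<open>auto intro: sat_approx_qf_antimono\<close>)
    then show ?thesis using Disj True by auto
  qed (use Disj in auto)
qed auto

lemma eventually_sat_approx_fm:
  assumes H: "subgroup_of H" and c: "0 < c"
  shows "existential f \<Longrightarrow> max_var f < v \<Longrightarrow> (\<And>k. r k \<in> H) \<Longrightarrow> r v = c \<Longrightarrow>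
    sat (quot_struc H (infinitesimals H c)) (coset (infinitesimals H c) \<circ> r) f \<Longrightarrow>
    \<forall>\<^sub>F M in sequentially. \<forall>N. sat (sub_struc H) r (approx_fm v N M f)"
proof (induction f arbitrary: r rule: existential_induct)
  case (qfree f)
  then show ?case
    using eventually_sat_approx_qf[OF H c, of r v f] unfolding eqTrueI[OF qfree.prems(4)]
    by (simp add: approx_fm_qfree)
next
  case (Ex n g)
  obtain y where "y \<in> H"
    and y: "sat (quot_struc H (infinitesimals H c)) (coset (infinitesimals H c) \<circ> r(n := y)) g"
    using Ex.prems(4) unfolding sat_quot_Ex_iff by blast
  have "n \<noteq> v" using Ex.prems(1) by simp
  have "\<forall>\<^sub>F M in sequentially. \<forall>N. sat (sub_struc H) (r(n := y)) (approx_fm v N M g)"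
    by (rule Ex.IH[OF _ _ _ y]) (use Ex.prems(1-3) \<open>y \<in> H\<close> \<open>n \<noteq> v\<close> in auto)
  then show ?case by (rule eventually_mono) (use \<open>y \<in> H\<close> in auto)
qed

lemma sat_quot_of_approx_fm:
  assumes H: "subgroup_of H" and c: "0 < c" and sat: "aleph1_saturated (sub_struc H)"
  shows "existential f \<Longrightarrow> max_var f < v \<Longrightarrow> (\<And>k. r k \<in> H) \<Longrightarrow> r v = c \<Longrightarrow>
    \<forall>N. sat (sub_struc H) r (approx_fm v N M f) \<Longrightarrow>
    sat (quot_struc H (infinitesimals H c)) (coset (infinitesimals H c) \<circ> r) f"
proof (induction f arbitrary: r rule: existential_induct)
  case (qfree f)
  show ?case
    by (rule sat_quot_of_approx_qf[OF H c, THEN eqTrueE])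
      (use qfree in \<open>simp_all add: approx_fm_qfree\<close>)
next
  case (Ex n g)
  have "\<exists>y\<in>sdom (sub_struc H). \<forall>N. sat (sub_struc H) (r(n := y)) (approx_fm v N M g)"
  proof (rule aleph1_saturated_common_witness[OF sat])
    show "\<forall>k. r k \<in> sdom (sub_struc H)" using Ex.prems(2) by simp
    show "sat (sub_struc H) (r(n := a)) (approx_fm v N M g)"
      if "sat (sub_struc H) (r(n := a)) (approx_fm v (Suc N) M g)" for N a
      by (rule sat_approx_fm_antimono[OF _ that]) simp
    show "\<forall>N. sat (sub_struc H) r (Ex n (approx_fm v N M g))" using Ex.prems(4) by simp
  qed
  then obtain y where "y \<in> H" and y: "\<forall>N. sat (sub_struc H) (r(n := y)) (approx_fm v N M g)"
    by auto
  have "n \<noteq> v" using Ex.prems(1) by simp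
  have "sat (quot_struc H (infinitesimals H c)) (coset (infinitesimals H c) \<circ> r(n := y)) g"
    by (rule Ex.IH[OF _ _ _ y]) (use Ex.prems(1-3) \<open>y \<in> H\<close> \<open>n \<noteq> v\<close> in auto)
  then show ?case using \<open>y \<in> H\<close> unfolding sat_quot_Ex_iff by blast
qed

lemma sat_quot_infinitesimals_UNIV_existential:
  assumes G: "subgroup_of G" and ec: "ex_closed_emb (sub_struc G) (sub_struc UNIV) id"
    and c: "0 < c" and "c \<in> G" and sat: "aleph1_saturated (sub_struc G)"
    and "existential f" and r: "\<And>k. r k \<in> G"
    and sat_UNIV: "sat (quot_struc UNIV (infinitesimals UNIV c)) (coset (infinitesimals UNIV c) \<circ> r) f"
  shows "sat (quot_struc G (infinitesimals G c)) (coset (infinitesimals G c) \<circ> r) f"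
proof -
  define v where "v = Suc (max_var f)"
  define r' where "r' = r(v := c)"
  have "max_var f < v" by (simp add: v_def)
  have r'G: "r' k \<in> G" for k using r \<open>c \<in> G\<close> by (simp add: r'_def)
  have "r' v = c" by (simp add: r'_def)
  have agree: "\<forall>k\<le>max_var f. (coset E \<circ> r) k = (coset E \<circ> r') k" for E :: "'a set"
    using \<open>max_var f < v\<close> by (simp add: r'_def)
  have "sat (quot_struc UNIV (infinitesimals UNIV c)) (coset (infinitesimals UNIV c) \<circ> r') f"
    using sat_UNIV sat_cong[OF agree] by (simp add: comp_def)
  then have "\<forall>\<^sub>F M in sequentially. \<forall>N. sat (sub_struc UNIV) r' (approx_fm v N M f)"
    by (rule eventually_sat_approx_fm[where r = r', OF subgroup_of_UNIV c \<open>existential f\<close>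
          \<open>max_var f < v\<close> UNIV_I \<open>r' v = c\<close>])
  then obtain M where "\<forall>N. sat (sub_struc UNIV) r' (approx_fm v N M f)"
    by (auto simp: eventually_sequentially)
  then have "\<forall>N. sat (sub_struc G) r' (approx_fm v N M f)"
    using ex_closed_emb_UNIV_existential[OF ec existential_approx_fm[OF \<open>existential f\<close>]] r'G
    by blast
  then have "sat (quot_struc G (infinitesimals G c)) (coset (infinitesimals G c) \<circ> r') f"
    by (rule sat_quot_of_approx_fm[where r = r', OF G c sat \<open>existential f\<close> \<open>max_var f < v\<close>
          r'G \<open>r' v = c\<close>])
  then show ?thesis using sat_cong[OF agree] by (simp add: comp_def)
qed

section \<open>Purity and existential closedness of the quotients\<close>

lemma min_convex_quotient_pure:
  assumes G: "subgroup_of G" and ec: "ex_closed_emb (sub_struc G) (sub_struc UNIV) id"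
    and "\<gamma> \<in> G" and D': "min_convex_containing UNIV \<gamma> D'"
    and "0 < n" and "g \<in> G" and "coset D' (nsmul n x) = coset D' g"
  shows "\<exists>y\<in>G. coset D' x = coset D' y"
proof -
  have D'_eq: "D' = finites UNIV (gabs \<gamma>)"
    using min_convex_containing_eq_finites[OF subgroup_of_UNIV UNIV_I D'] .
  have D'_sub: "subgroup_of D'"
    using D' by (simp add: min_convex_containing_def convex_subgroup_def)
  have "nsmul n x - g \<in> D'" using assms(7) coset_eq_iff[OF D'_sub] by blast
  then obtain m where m: "gabs (nsmul n x - g) \<le> nsmul m (gabs \<gamma>)"
    unfolding D'_eq finites_def by blast
  define bound_fm where "bound_fm =
    Conj (Neg (Lt (Plus (Var 1) (trm_nsmul m (Var 2))) (trm_nsmul n (Var 0))))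
         (Neg (Lt (Plus (trm_nsmul n (Var 0)) (trm_nsmul m (Var 2))) (Var 1)))"
  define w :: "nat \<Rightarrow> 'a"
    where "w k = (if k = 1 then g else if k = 2 then gabs \<gamma> else 0)" for k
  have wG: "\<forall>k. w k \<in> G"
    using \<open>g \<in> G\<close> subgroup_gabs[OF G \<open>\<gamma> \<in> G\<close>] G by (simp add: w_def subgroup_of_def)
  have sat_bound: "sat (sub_struc H) (w(0 := a)) bound_fm \<longleftrightarrow> gabs (nsmul n a - g) \<le> nsmul m (gabs \<gamma>)"
    for H a
    by (simp add: bound_fm_def w_def gabs_le_iff not_less algebra_simps)
  have "sat (sub_struc UNIV) w (Ex 0 bound_fm)" using m sat_bound by auto
  then have "sat (sub_struc G) w (Ex 0 bound_fm)"
    by (rule ex_closed_emb_UNIV_existential[OF ec _ wG, rotated]) (simp add: bound_fm_def)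
  then obtain y where "y \<in> G" "gabs (nsmul n y - g) \<le> nsmul m (gabs \<gamma>)" using sat_bound by auto
  then have "nsmul n y - g \<in> D'" unfolding D'_eq finites_def by blast
  then have "(nsmul n x - g) - (nsmul n y - g) \<in> D'"
    using subgroup_diff[OF D'_sub \<open>nsmul n x - g \<in> D'\<close>] by blast
  then have "nsmul n (x - y) \<in> D'" by (simp add: nsmul_diff)
  then obtain k where "gabs (nsmul n (x - y)) \<le> nsmul k (gabs \<gamma>)" unfolding D'_eq finites_def by blast
  moreover have "gabs (x - y) \<le> gabs (nsmul n (x - y))"
    using le_nsmul[OF \<open>0 < n\<close> gabs_nonneg] by (simp add: gabs_nsmul)
  ultimately have "x - y \<in> D'" unfolding D'_eq finites_def by (blast intro: order_trans)
  then show ?thesis using coset_eq_iff[OF D'_sub] \<open>y \<in> G\<close> by blast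
qed

lemma max_convex_quotient_ex_closed:
  assumes G: "subgroup_of G" and ec: "ex_closed_emb (sub_struc G) (sub_struc UNIV) id"
    and "\<gamma> \<in> G" and sat: "aleph1_saturated (sub_struc G)"
    and D: "max_convex_avoiding G \<gamma> D" and D': "max_convex_avoiding UNIV \<gamma> D'"
  shows "ex_closed_emb (quot_struc G D) (quot_struc UNIV D') (\<lambda>X. setplus X D')"
proof -
  define c where "c = gabs \<gamma>"
  have c: "0 < c" unfolding c_def using gabs_pos[OF max_convex_avoiding_nonzero[OF D]] .
  have "c \<in> G" unfolding c_def using subgroup_gabs[OF G \<open>\<gamma> \<in> G\<close>] .
  have D_eq: "D = infinitesimals G c"
    unfolding c_def using max_convex_avoiding_eq_infinitesimals[OF G \<open>\<gamma> \<in> G\<close> D] .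
  have D'_eq: "D' = infinitesimals UNIV c"
    unfolding c_def using max_convex_avoiding_eq_infinitesimals[OF subgroup_of_UNIV UNIV_I D'] .
  have "subgroup_of D" "subgroup_of D'"
    unfolding D_eq D'_eq
    using convex_subgroup_infinitesimals[OF G c] convex_subgroup_infinitesimals[OF subgroup_of_UNIV c]
    by (simp_all add: convex_subgroup_subgroup)
  moreover have "D \<subseteq> D'" unfolding D_eq D'_eq infinitesimals_def by blast
  ultimately have coset_lift: "setplus (coset D x) D' = coset D' x" for x
    by (rule setplus_coset_subgroup)
  then have lift: "(\<lambda>X. setplus X D') \<circ> (coset D \<circ> r) = coset D' \<circ> r" for r :: "nat \<Rightarrow> 'a"
    by (simp add: fun_eq_iff)
  show ?thesis
    unfolding ex_closed_emb_def is_embedding_def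
  proof (intro conjI allI impI)
    show "(\<lambda>X. setplus X D') ` sdom (quot_struc G D) \<subseteq> sdom (quot_struc UNIV D')"
      using coset_lift by auto
  next
    fix f and v :: "nat \<Rightarrow> 'a set"
    assume "qfree f" and "\<forall>n. v n \<in> sdom (quot_struc G D)"
    from this(2) obtain r where r: "\<And>k. r k \<in> G" and v: "v = coset D \<circ> r"
      by (rule quot_valuation_lift) auto
    show "sat (quot_struc UNIV D') ((\<lambda>X. setplus X D') \<circ> v) f = sat (quot_struc G D) v f"
      unfolding v lift unfolding D_eq D'_eq
      by (simp only: sat_quot_infinitesimals_qfree_cong[OF G c r \<open>qfree f\<close>])
  next
    fix f and v :: "nat \<Rightarrow> 'a set"
    assume "existential f" and "\<forall>n. v n \<in> sdom (quot_struc G D)"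
      and "sat (quot_struc UNIV D') ((\<lambda>X. setplus X D') \<circ> v) f"
    from this(2) obtain r where r: "\<And>k. r k \<in> G" and v: "v = coset D \<circ> r"
      by (rule quot_valuation_lift) auto
    have "sat (quot_struc UNIV (infinitesimals UNIV c)) (coset (infinitesimals UNIV c) \<circ> r) f"
      using \<open>sat (quot_struc UNIV D') _ f\<close> unfolding v lift unfolding D'_eq .
    then show "sat (quot_struc G D) v f"
      unfolding v D_eq
      by (rule sat_quot_infinitesimals_UNIV_existential[where r = r,
            OF G ec c \<open>c \<in> G\<close> sat \<open>existential f\<close> r])
  qed
qed

theorem lemma2p11:
  fixes G :: "'a::linordered_ab_group_add set" and \<gamma> :: 'a
  assumes "subgroup_of G"
    and "ex_closed_emb (sub_struc G) (sub_struc (UNIV :: 'a set)) id"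
    and "\<gamma> \<in> G"
  shows "(\<forall>Dp Dp'. min_convex_containing G \<gamma> Dp \<and> min_convex_containing UNIV \<gamma> Dp' \<longrightarrow>
            Dp = Dp' \<inter> G \<and>
            (\<forall>(x::'a) (n::nat). n > 0 \<longrightarrow>
                (\<exists>g\<in>G. coset Dp' (\<Sum>i<n. x) = coset Dp' g) \<longrightarrow>
                (\<exists>g\<in>G. coset Dp' x = coset Dp' g)))
       \<and> (aleph1_saturated (sub_struc G) \<longrightarrow>
            (\<forall>D D'. max_convex_avoiding G \<gamma> D \<and> max_convex_avoiding UNIV \<gamma> D' \<longrightarrow>
               ex_closed_emb (quot_struc G D) (quot_struc UNIV D') (\<lambda>X. setplus X D')))"
  using min_convex_containing_restrict[OF assms(1,3)]
    min_convex_quotient_pure[OF assms]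
    max_convex_quotient_ex_closed[OF assms]
  by (auto simp: sum_lessThan_const_eq_nsmul)

end
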